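(* Let $T$ be a set of formulas and $\varphi$ a formula in the language of Rational Pavelka logic RPL. Then $T\vdash_{\mathrm{RPL}}\varphi$ if and only if $T^\star\cup T_Q\vdash_{\text{Ł}}\varphi^\star$. In particular (taking $T=\emptyset$), $\varphi$ is a theorem of RPL iff $T_Q\vdash_{\text{Ł}}\varphi^\star$.
   Context: Łukasiewicz logic Ł: propositional logic in connectives $\cdot,\to,\land,\lor,\neg,\oplus,\equiv,\overline0,\overline1$ with modus ponens, with variables from a countably infinite set $X$ together with further variables as needed; it is finitely strongly complete w.r.t. the standard MV-algebra $[0,1]_{\text{Ł}}$ ($x\cdot y=\max(0,x+y-1)$, $x\to y=\min(1,1-x+y)$, $\neg x=1-x$, $x\oplus y=\min(1,x+y)$, $\land=\min$, $\lor=\max$, $x\equiv y=1-|x-y|$). Rational Pavelka logic RPL extends the language of Ł (over variables $X$) with a constant $\overline r$ for each rational $r\in[0,1]$, and extends the axioms of Ł with all bookkeeping axioms: $\neg\overline r\equiv\overline{1-r}$ and $(\overline r*\overline s)\equiv\overline{r*s}$ for binary connectives $*$, where $r*s$ is computed in $[0,1]_{\text{Ł}}$. Let $Q=\{q_{m/n}\mid m,n\in\mathbb N, m\le n, n>0\}$ be fresh variables (disjoint from $X$). $T_Q$ is the Ł-theory with axioms $q_{0/n}\equiv\overline0$ ($n>0$); $q_{1/1}\equiv\overline1$; $q_{1/n}\equiv(\neg q_{1/n})^{n-1}$ ($n\ge2$); $q_{m/n}\equiv m\,q_{1/n}$ ($m\le n$, $n\ge2$), where $x^k$ is the $k$-fold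 product and $kx$ the $k$-fold $\oplus$-sum. The translation $\star$ maps RPL-formulas to Ł-formulas: $x^\star=x$ for $x\in X$, $\overline0^\star=\overline0$, $\overline1^\star=\overline1$, $\overline{r}^\star=q_{m/n}$ for each rational $r\in(0,1)$ where $r=m/n$ in lowest terms, and $\star$ commutes with all connectives; $T^\star=\{\psi^\star\mid\psi\in T\}$. *)

theory Defs
  imports Complex_Main
begin

text \<open>Propositional variables: the countably infinite set X of the paper is
  represented by VX n (n a natural number); the fresh variables q_{m/n} are
  VQ m n.  Both languages (L over X and Q, RPL over X) share one datatype of
  formulas; truth constants are given by rationals (in L only 0 and 1 occur).\<close>

datatype var = VX nat | VQ nat nat

datatype fm =
    Var var
  | Const rat
  | Prod fm fm
  | Imp fm fm
  | And fm fm
  | Or fm fm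
  | Neg fm
  | Oplus fm fm
  | Equiv fm fm

fun fconsts :: "fm \<Rightarrow> rat set" where
  "fconsts (Var x) = {}"
| "fconsts (Const r) = {r}"
| "fconsts (Prod a b) = fconsts a \<union> fconsts b"
| "fconsts (Imp a b) = fconsts a \<union> fconsts b"
| "fconsts (And a b) = fconsts a \<union> fconsts b"
| "fconsts (Or a b) = fconsts a \<union> fconsts b"
| "fconsts (Neg a) = fconsts a"
| "fconsts (Oplus a b) = fconsts a \<union> fconsts b"
| "fconsts (Equiv a b) = fconsts a \<union> fconsts b"

fun vars :: "fm \<Rightarrow> var set" where
  "vars (Var x) = {x}"
| "vars (Const r) = {}"
| "vars (Prod a b) = vars a \<union> vars b"
| "vars (Imp a b) = vars a \<union> vars b"
| "vars (And a b) = vars a \<union> vars b"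
| "vars (Or a b) = vars a \<union> vars b"
| "vars (Neg a) = vars a"
| "vars (Oplus a b) = vars a \<union> vars b"
| "vars (Equiv a b) = vars a \<union> vars b"

definition L_fm :: "fm set" where
  "L_fm = {\<phi>. fconsts \<phi> \<subseteq> {0, 1}}"

definition RPL_fm :: "fm set" where
  "RPL_fm = {\<phi>. fconsts \<phi> \<subseteq> {r. 0 \<le> r \<and> r \<le> 1} \<and> vars \<phi> \<subseteq> range VX}"

text \<open>Axioms of L, instantiated with formulas from a language S: the four
  Lukasiewicz axioms for implication and negation, the axiom 1, and
  for every other connective a pair of implications relating it to its standard
  definition in terms of implication and negation.\<close>
inductive_set L_axioms :: "fm set \<Rightarrow> fm set" for S :: "fm set" where
  ax1: "\<lbrakk>a \<in> S; b \<in> S\<rbrakk> \<Longrightarrow> Imp a (Imp b a) \<in> L_axioms S"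
| ax2: "\<lbrakk>a \<in> S; b \<in> S; c \<in> S\<rbrakk> \<Longrightarrow> Imp (Imp a b) (Imp (Imp b c) (Imp a c)) \<in> L_axioms S"
| ax3: "\<lbrakk>a \<in> S; b \<in> S\<rbrakk> \<Longrightarrow> Imp (Imp (Imp a b) b) (Imp (Imp b a) a) \<in> L_axioms S"
| ax4: "\<lbrakk>a \<in> S; b \<in> S\<rbrakk> \<Longrightarrow> Imp (Imp (Neg b) (Neg a)) (Imp a b) \<in> L_axioms S"
| top: "Const 1 \<in> L_axioms S"
| bot1: "Imp (Const 0) (Neg (Const 1)) \<in> L_axioms S"
| bot2: "Imp (Neg (Const 1)) (Const 0) \<in> L_axioms S"
| prod1: "\<lbrakk>a \<in> S; b \<in> S\<rbrakk> \<Longrightarrow> Imp (Prod a b) (Neg (Imp a (Neg b))) \<in> L_axioms S"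
| prod2: "\<lbrakk>a \<in> S; b \<in> S\<rbrakk> \<Longrightarrow> Imp (Neg (Imp a (Neg b))) (Prod a b) \<in> L_axioms S"
| oplus1: "\<lbrakk>a \<in> S; b \<in> S\<rbrakk> \<Longrightarrow> Imp (Oplus a b) (Imp (Neg a) b) \<in> L_axioms S"
| oplus2: "\<lbrakk>a \<in> S; b \<in> S\<rbrakk> \<Longrightarrow> Imp (Imp (Neg a) b) (Oplus a b) \<in> L_axioms S"
| or1: "\<lbrakk>a \<in> S; b \<in> S\<rbrakk> \<Longrightarrow> Imp (Or a b) (Imp (Imp a b) b) \<in> L_axioms S"
| or2: "\<lbrakk>a \<in> S; b \<in> S\<rbrakk> \<Longrightarrow> Imp (Imp (Imp a b) b) (Or a b) \<in> L_axioms S"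
| and1: "\<lbrakk>a \<in> S; b \<in> S\<rbrakk> \<Longrightarrow>
     Imp (And a b) (Neg (Imp (Imp (Neg a) (Neg b)) (Neg b))) \<in> L_axioms S"
| and2: "\<lbrakk>a \<in> S; b \<in> S\<rbrakk> \<Longrightarrow>
     Imp (Neg (Imp (Imp (Neg a) (Neg b)) (Neg b))) (And a b) \<in> L_axioms S"
| equiv1: "\<lbrakk>a \<in> S; b \<in> S\<rbrakk> \<Longrightarrow>
     Imp (Equiv a b) (Neg (Imp (Imp a b) (Neg (Imp b a)))) \<in> L_axioms S"
| equiv2: "\<lbrakk>a \<in> S; b \<in> S\<rbrakk> \<Longrightarrow>
     Imp (Neg (Imp (Imp a b) (Neg (Imp b a)))) (Equiv a b) \<in> L_axioms S"

inductive derivable :: "fm set \<Rightarrow> fm set \<Rightarrow> fm \<Rightarrow> bool" for Ax T where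
  axiom: "\<phi> \<in> Ax \<Longrightarrow> derivable Ax T \<phi>"
| hyp: "\<phi> \<in> T \<Longrightarrow> derivable Ax T \<phi>"
| mp: "\<lbrakk>derivable Ax T \<phi>; derivable Ax T (Imp \<phi> \<psi>)\<rbrakk> \<Longrightarrow> derivable Ax T \<psi>"

definition L_prov :: "fm set \<Rightarrow> fm \<Rightarrow> bool" where
  "L_prov T \<phi> \<longleftrightarrow> derivable (L_axioms L_fm) T \<phi>"

definition luk_prod :: "rat \<Rightarrow> rat \<Rightarrow> rat" where "luk_prod x y = max 0 (x + y - 1)"
definition luk_imp :: "rat \<Rightarrow> rat \<Rightarrow> rat" where "luk_imp x y = min 1 (1 - x + y)"
definition luk_oplus :: "rat \<Rightarrow> rat \<Rightarrow> rat" where "luk_oplus x y = min 1 (x + y)"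
definition luk_equiv :: "rat \<Rightarrow> rat \<Rightarrow> rat" where "luk_equiv x y = 1 - \<bar>x - y\<bar>"

definition unit_rat :: "rat set" where "unit_rat = {r. 0 \<le> r \<and> r \<le> 1}"

inductive_set bookkeeping :: "fm set" where
  bk_neg: "r \<in> unit_rat \<Longrightarrow> Equiv (Neg (Const r)) (Const (1 - r)) \<in> bookkeeping"
| bk_prod: "\<lbrakk>r \<in> unit_rat; s \<in> unit_rat\<rbrakk> \<Longrightarrow>
    Equiv (Prod (Const r) (Const s)) (Const (luk_prod r s)) \<in> bookkeeping"
| bk_imp: "\<lbrakk>r \<in> unit_rat; s \<in> unit_rat\<rbrakk> \<Longrightarrow>
    Equiv (Imp (Const r) (Const s)) (Const (luk_imp r s)) \<in> bookkeeping"
| bk_and: "\<lbrakk>r \<in> unit_rat; s \<in> unit_rat\<rbrakk> \<Longrightarrow>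
    Equiv (And (Const r) (Const s)) (Const (min r s)) \<in> bookkeeping"
| bk_or: "\<lbrakk>r \<in> unit_rat; s \<in> unit_rat\<rbrakk> \<Longrightarrow>
    Equiv (Or (Const r) (Const s)) (Const (max r s)) \<in> bookkeeping"
| bk_oplus: "\<lbrakk>r \<in> unit_rat; s \<in> unit_rat\<rbrakk> \<Longrightarrow>
    Equiv (Oplus (Const r) (Const s)) (Const (luk_oplus r s)) \<in> bookkeeping"
| bk_equiv: "\<lbrakk>r \<in> unit_rat; s \<in> unit_rat\<rbrakk> \<Longrightarrow>
    Equiv (Equiv (Const r) (Const s)) (Const (luk_equiv r s)) \<in> bookkeeping"

definition RPL_prov :: "fm set \<Rightarrow> fm \<Rightarrow> bool" where
  "RPL_prov T \<phi> \<longleftrightarrow> derivable (L_axioms RPL_fm \<union> bookkeeping) T \<phi>"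

abbreviation q :: "nat \<Rightarrow> nat \<Rightarrow> fm" where "q m n \<equiv> Var (VQ m n)"

fun fpow :: "fm \<Rightarrow> nat \<Rightarrow> fm" where
  "fpow a 0 = Const 1"
| "fpow a (Suc 0) = a"
| "fpow a (Suc (Suc k)) = Prod (fpow a (Suc k)) a"

fun fmult :: "nat \<Rightarrow> fm \<Rightarrow> fm" where
  "fmult 0 a = Const 0"
| "fmult (Suc 0) a = a"
| "fmult (Suc (Suc k)) a = Oplus (fmult (Suc k) a) a"

inductive_set T_Q :: "fm set" where
  tq0: "n > 0 \<Longrightarrow> Equiv (q 0 n) (Const 0) \<in> T_Q"
| tq1: "Equiv (q 1 1) (Const 1) \<in> T_Q"
| tq2: "n \<ge> 2 \<Longrightarrow> Equiv (q 1 n) (fpow (Neg (q 1 n)) (n - 1)) \<in> T_Q"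
| tq3: "\<lbrakk>m \<le> n; n \<ge> 2\<rbrakk> \<Longrightarrow> Equiv (q m n) (fmult m (q 1 n)) \<in> T_Q"

text \<open>Translation of a rational constant: 0 and 1 stay, r = m/n in lowest terms
  in (0,1) goes to q_{m/n} (quotient_of yields the reduced fraction).\<close>
definition const_star :: "rat \<Rightarrow> fm" where
  "const_star r = (if r = 0 then Const 0 else if r = 1 then Const 1
     else Var (VQ (nat (fst (quotient_of r))) (nat (snd (quotient_of r)))))"

fun star :: "fm \<Rightarrow> fm" where
  "star (Var x) = Var x"
| "star (Const r) = const_star r"
| "star (Prod a b) = Prod (star a) (star b)"
| "star (Imp a b) = Imp (star a) (star b)"
| "star (And a b) = And (star a) (star b)"
| "star (Or a b) = Or (star a) (star b)"
| "star (Neg a) = Neg (star a)"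
| "star (Oplus a b) = Oplus (star a) (star b)"
| "star (Equiv a b) = Equiv (star a) (star b)"

end

theory Submission
  imports Defs
begin

text \<open>The substitution that reads \<open>q\<^sub>m\<^sub>/\<^sub>n\<close> as the constant \<open>m/n\<close> turns every derivation
  from \<open>T\<^sup>\<star> \<union> T\<^sub>Q\<close> into an RPL derivation from \<open>T\<close>: the substituted axioms of \<open>T\<^sub>Q\<close>
  are true closed equations, and RPL proves every true closed equation by the bookkeeping
  axioms.  Conversely \<open>\<star>\<close> turns RPL derivations into Lukasiewicz derivations once the
  translated bookkeeping axioms are provable from \<open>T\<^sub>Q\<close>.  This is checked in the
  Lindenbaum algebra of \<open>T\<^sub>Q\<close>, a Wajsberg (MV-) algebra, without any completeness theorem:
  the axioms of \<open>T\<^sub>Q\<close> say that the class \<open>u\<^sub>n\<close> of \<open>q\<^sub>1\<^sub>/\<^sub>n\<close> solves \<open>u = (\<not>u)\<^sup>n\<^sup>-\<^sup>1\<close>,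
  an equation with at most one solution in any MV-algebra; hence \<open>u\<^sub>n = d u\<^sub>d\<^sub>n\<close>, and over a
  common denominator \<open>N\<close> the classes \<open>k u\<^sub>N\<close> of the translated constants \<open>k/N\<close> compute
  exactly like \<open>k/N\<close> under the Lukasiewicz operations.\<close>

lemma derivable_mono:
  "derivable Ax T \<phi> \<Longrightarrow> Ax \<subseteq> Ax' \<Longrightarrow> T \<subseteq> T' \<Longrightarrow> derivable Ax' T' \<phi>"
  by (induct rule: derivable.induct) (auto intro: derivable.intros)

lemma derivable_map:
  assumes "derivable Ax T \<phi>"
    and "\<And>\<psi>. \<psi> \<in> Ax \<Longrightarrow> derivable Ax' T' (f \<psi>)"
    and "\<And>\<psi>. \<psi> \<in> T \<Longrightarrow> derivable Ax' T' (f \<psi>)"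
    and "\<And>\<psi> \<chi>. f (Imp \<psi> \<chi>) = Imp (f \<psi>) (f \<chi>)"
  shows "derivable Ax' T' (f \<phi>)"
  using assms(1) by induct (use assms(2-4) in \<open>metis derivable.mp\<close>)+

locale luk_calculus =
  fixes S :: "fm set" and B :: "fm set" and H :: "fm set"
  assumes Imp_closed: "a \<in> S \<Longrightarrow> b \<in> S \<Longrightarrow> Imp a b \<in> S"
    and Neg_closed: "a \<in> S \<Longrightarrow> Neg a \<in> S"
    and one_closed: "Const 1 \<in> S"
begin

abbreviation prov :: "fm \<Rightarrow> bool" where
  "prov \<equiv> derivable (L_axioms S \<union> B) H"

lemma prov_axiom: "a \<in> L_axioms S \<Longrightarrow> prov a"
  by (simp add: derivable.axiom)

lemma prov_one: "prov (Const 1)"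
  by (simp add: prov_axiom L_axioms.top)

lemma imp_weaken: "a \<in> S \<Longrightarrow> b \<in> S \<Longrightarrow> prov a \<Longrightarrow> prov (Imp b a)"
  by (rule derivable.mp[OF _ prov_axiom[OF L_axioms.ax1]])

lemma imp_trans:
  "a \<in> S \<Longrightarrow> b \<in> S \<Longrightarrow> c \<in> S \<Longrightarrow> prov (Imp a b) \<Longrightarrow> prov (Imp b c) \<Longrightarrow> prov (Imp a c)"
  using derivable.mp[OF _ derivable.mp[OF _ prov_axiom[OF L_axioms.ax2]]] by blast

lemma imp_refl: "a \<in> S \<Longrightarrow> prov (Imp a a)"
  by (metis Imp_closed L_axioms.ax1 L_axioms.ax2 L_axioms.ax3 derivable.mp prov_axiom)

lemma imp_one_imp: "a \<in> S \<Longrightarrow> prov (Imp (Imp (Const 1) a) a)"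
  by (metis Imp_closed L_axioms.ax1 L_axioms.ax3 derivable.mp one_closed prov_axiom prov_one)

lemma imp_modus_ponens: "a \<in> S \<Longrightarrow> b \<in> S \<Longrightarrow> prov (Imp a (Imp (Imp a b) b))"
  by (rule imp_trans[OF _ _ _ prov_axiom[OF L_axioms.ax1] prov_axiom[OF L_axioms.ax3]])
    (auto intro: Imp_closed)

lemma imp_exchange:
  assumes "a \<in> S" "b \<in> S" "c \<in> S" "prov (Imp a (Imp b c))"
  shows "prov (Imp b (Imp a c))"
proof -
  have "prov (Imp (Imp (Imp b c) c) (Imp a c))"
    by (rule derivable.mp[OF assms(4) prov_axiom[OF L_axioms.ax2]]) (use assms Imp_closed in auto)
  then show ?thesis
    using imp_trans[OF _ _ _ imp_modus_ponens] assms Imp_closed by blast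
qed

lemma imp_mono_right:
  assumes "a \<in> S" "b \<in> S" "c \<in> S" "prov (Imp b c)"
  shows "prov (Imp (Imp a b) (Imp a c))"
proof -
  have "prov (Imp (Imp b c) (Imp (Imp a b) (Imp a c)))"
    by (rule imp_exchange[OF _ _ _ prov_axiom[OF L_axioms.ax2]]) (use assms Imp_closed in auto)
  then show ?thesis using assms(4) derivable.mp by blast
qed

lemma imp_antimono_left:
  "a \<in> S \<Longrightarrow> b \<in> S \<Longrightarrow> c \<in> S \<Longrightarrow> prov (Imp a b) \<Longrightarrow> prov (Imp (Imp b c) (Imp a c))"
  by (rule derivable.mp[OF _ prov_axiom[OF L_axioms.ax2]])

lemma neg_neg_elim:
  assumes a: "a \<in> S"
  shows "prov (Imp (Neg (Neg a)) a)"
proof -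
  let ?nn1 = "Neg (Neg (Const 1))" and ?n1 = "Neg (Const 1)" and ?nna = "Neg (Neg a)"
  have S: "?nn1 \<in> S" "?n1 \<in> S" "?nna \<in> S" "Neg a \<in> S"
    using a one_closed Neg_closed by auto
  have "prov (Imp ?nna (Imp ?nn1 ?nna))"
    by (rule prov_axiom[OF L_axioms.ax1]) (use S in auto)
  moreover have "prov (Imp (Imp ?nn1 ?nna) (Imp (Neg a) ?n1))"
    by (rule prov_axiom[OF L_axioms.ax4]) (use S in auto)
  moreover have "prov (Imp (Imp (Neg a) ?n1) (Imp (Const 1) a))"
    by (rule prov_axiom[OF L_axioms.ax4[OF one_closed a]])
  ultimately have "prov (Imp ?nna (Imp (Const 1) a))"
    using imp_trans S a one_closed Imp_closed by metis
  then show ?thesis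
    using imp_trans[OF _ _ a _ imp_one_imp[OF a]] S a one_closed Imp_closed by blast
qed

lemma neg_neg_intro: "a \<in> S \<Longrightarrow> prov (Imp a (Neg (Neg a)))"
  by (metis Neg_closed L_axioms.ax4 derivable.mp neg_neg_elim prov_axiom)

lemma contrapose:
  assumes "a \<in> S" "b \<in> S" "prov (Imp a b)"
  shows "prov (Imp (Neg b) (Neg a))"
proof -
  have "prov (Imp (Neg (Neg a)) (Neg (Neg b)))"
    using imp_trans[OF _ _ _ imp_trans[OF _ _ _ neg_neg_elim assms(3)] neg_neg_intro]
      assms Neg_closed by blast
  then show ?thesis
    by (rule derivable.mp[OF _ prov_axiom[OF L_axioms.ax4]]) (use assms Neg_closed in auto)
qed

end

text \<open>Provable equivalence as a relation on all formulas: the quotient type of a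
  Lindenbaum algebra needs an equivalence on the whole type \<open>fm\<close>, so formulas
  outside the language are first projected into it.\<close>

definition prov_equiv :: "fm set \<Rightarrow> fm set \<Rightarrow> fm set \<Rightarrow> (fm \<Rightarrow> fm) \<Rightarrow> fm \<Rightarrow> fm \<Rightarrow> bool" where
  "prov_equiv S B H proj a b \<longleftrightarrow>
     derivable (L_axioms S \<union> B) H (Imp (proj a) (proj b))
   \<and> derivable (L_axioms S \<union> B) H (Imp (proj b) (proj a))"

locale luk_lindenbaum = luk_calculus +
  fixes proj :: "fm \<Rightarrow> fm"
  assumes proj_in: "proj a \<in> S"
    and proj_id: "a \<in> S \<Longrightarrow> proj a = a"
    and proj_Imp: "proj (Imp a b) = Imp (proj a) (proj b)"
    and proj_Neg: "proj (Neg a) = Neg (proj a)"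
    and proj_Prod: "proj (Prod a b) = Prod (proj a) (proj b)"
    and proj_Oplus: "proj (Oplus a b) = Oplus (proj a) (proj b)"
    and proj_And: "proj (And a b) = And (proj a) (proj b)"
    and proj_Or: "proj (Or a b) = Or (proj a) (proj b)"
    and proj_Equiv: "proj (Equiv a b) = Equiv (proj a) (proj b)"
    and proj_zero: "proj (Const 0) = Const 0"
    and proj_one: "proj (Const 1) = Const 1"
begin

abbreviation prov_eqv :: "fm \<Rightarrow> fm \<Rightarrow> bool" where
  "prov_eqv \<equiv> prov_equiv S B H proj"

lemmas proj_simps = proj_Imp proj_Neg proj_Prod proj_Oplus proj_And proj_Or proj_Equiv
  proj_zero proj_one

lemma equivp_prov_eqv: "equivp prov_eqv"
  unfolding prov_equiv_def
  by (rule equivpI) (auto simp: reflp_def symp_def transp_def intro: imp_refl[OF proj_in]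
      imp_trans[OF proj_in proj_in proj_in])

lemma prov_eqv_one_iff: "prov_eqv a (Const 1) \<longleftrightarrow> prov (proj a)"
  unfolding prov_equiv_def proj_one
  by (metis proj_in imp_weaken one_closed prov_one derivable.mp)

lemma prov_eqv_Imp: "prov_eqv a a' \<Longrightarrow> prov_eqv b b' \<Longrightarrow> prov_eqv (Imp a b) (Imp a' b')"
  unfolding prov_equiv_def proj_Imp
  by (meson Imp_closed imp_antimono_left imp_mono_right imp_trans proj_in)

lemma prov_eqv_Neg: "prov_eqv a a' \<Longrightarrow> prov_eqv (Neg a) (Neg a')"
  unfolding prov_equiv_def proj_Neg using contrapose[OF proj_in proj_in] by blast

lemma prov_eqv_W1: "prov_eqv (Imp (Const 1) a) a"
  unfolding prov_equiv_def proj_simps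
  using imp_one_imp[OF proj_in] prov_axiom[OF L_axioms.ax1[OF proj_in one_closed]] by blast

lemma prov_eqv_W2: "prov_eqv (Imp (Imp a b) (Imp (Imp b c) (Imp a c))) (Const 1)"
  unfolding prov_eqv_one_iff proj_simps by (intro prov_axiom L_axioms.ax2 proj_in)

lemma prov_eqv_W3: "prov_eqv (Imp (Imp a b) b) (Imp (Imp b a) a)"
  unfolding prov_equiv_def proj_simps using prov_axiom[OF L_axioms.ax3[OF proj_in proj_in]] by blast

lemma prov_eqv_W4: "prov_eqv (Imp (Imp (Neg a) (Neg b)) (Imp b a)) (Const 1)"
  unfolding prov_eqv_one_iff proj_simps by (intro prov_axiom L_axioms.ax4 proj_in)

lemma prov_eqv_Prod: "prov_eqv (Prod a b) (Neg (Imp a (Neg b)))"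
  unfolding prov_equiv_def proj_simps by (blast intro: prov_axiom L_axioms.intros proj_in)

lemma prov_eqv_Oplus: "prov_eqv (Oplus a b) (Imp (Neg a) b)"
  unfolding prov_equiv_def proj_simps by (blast intro: prov_axiom L_axioms.intros proj_in)

lemma prov_eqv_Or: "prov_eqv (Or a b) (Imp (Imp a b) b)"
  unfolding prov_equiv_def proj_simps by (blast intro: prov_axiom L_axioms.intros proj_in)

lemma prov_eqv_And: "prov_eqv (And a b) (Neg (Imp (Imp (Neg a) (Neg b)) (Neg b)))"
  unfolding prov_equiv_def proj_simps by (blast intro: prov_axiom L_axioms.intros proj_in)

lemma prov_eqv_Equiv: "prov_eqv (Equiv a b) (Neg (Imp (Imp a b) (Neg (Imp b a))))"
  unfolding prov_equiv_def proj_simps by (blast intro: prov_axiom L_axioms.intros proj_in)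

lemma prov_eqv_zero: "prov_eqv (Const 0) (Neg (Const 1))"
  unfolding prov_equiv_def proj_simps by (blast intro: prov_axiom L_axioms.intros)

end

section \<open>Wajsberg algebras\<close>

locale wajsberg_algebra =
  fixes imp :: "'a \<Rightarrow> 'a \<Rightarrow> 'a"
    and neg :: "'a \<Rightarrow> 'a"
    and one :: 'a
  assumes W1: "imp one x = x"
    and W2: "imp (imp x y) (imp (imp y z) (imp x z)) = one"
    and W3: "imp (imp x y) y = imp (imp y x) x"
    and W4: "imp (imp (neg x) (neg y)) (imp y x) = one"
begin

abbreviation zero :: 'a where "zero \<equiv> neg one"
abbreviation oplus :: "'a \<Rightarrow> 'a \<Rightarrow> 'a" where "oplus x y \<equiv> imp (neg x) y"
abbreviation odot :: "'a \<Rightarrow> 'a \<Rightarrow> 'a" where "odot x y \<equiv> neg (imp x (neg y))"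
abbreviation join :: "'a \<Rightarrow> 'a \<Rightarrow> 'a" where "join x y \<equiv> imp (imp x y) y"
abbreviation meet :: "'a \<Rightarrow> 'a \<Rightarrow> 'a" where "meet x y \<equiv> neg (join (neg x) (neg y))"
abbreviation le :: "'a \<Rightarrow> 'a \<Rightarrow> bool" where "le x y \<equiv> imp x y = one"

lemma imp_refl: "imp x x = one" by (metis W1 W2)
lemma imp_one: "imp x one = one" by (metis W1 W2 W3)
lemma le_antisym: "le x y \<Longrightarrow> le y x \<Longrightarrow> x = y" by (metis W1 W3)
lemma le_trans: "le x y \<Longrightarrow> le y z \<Longrightarrow> le x z" by (metis W1 W2)
lemma imp_K: "imp x (imp y x) = one" by (metis W1 W2 W3)
lemma neg_neg: "neg (neg x) = x" by (metis W1 W2 W3 W4)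
lemma imp_contrapos: "imp (neg y) (neg x) = imp x y" by (metis W4 le_antisym neg_neg)
lemma imp_antimono_left: "le a b \<Longrightarrow> le (imp b c) (imp a c)" by (metis W1 W2)
lemma le_join: "le y (join y z)" by (metis imp_K W3)

lemma imp_exchange: "imp x (imp y z) = imp y (imp x z)"
proof -
  have "le (imp x (imp y z)) (imp y (imp x z))" for x y z
    using W2 le_join imp_antimono_left le_trans by blast
  then show ?thesis by (meson le_antisym)
qed

lemma odot_residuation: "imp (odot x y) z = imp x (imp y z)"
  by (metis imp_contrapos imp_exchange neg_neg)

lemma prelinearity: "join (imp x y) (imp y x) = one"
proof -
  have "imp (imp x y) (imp y x) = imp y x"
    by (smt (verit, best) imp_K W1 W3 imp_contrapos imp_exchange)
  then show ?thesis by (simp add: imp_refl)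
qed

lemma oplus_comm: "oplus x y = oplus y x" by (metis imp_contrapos neg_neg)
lemma oplus_assoc: "oplus (oplus x y) z = oplus x (oplus y z)" by (metis odot_residuation neg_neg)
lemma odot_comm: "odot x y = odot y x" by (metis imp_contrapos neg_neg)
lemma odot_assoc: "odot (odot x y) z = odot x (odot y z)" by (simp add: neg_neg odot_residuation)
lemma oplus_zero: "oplus zero x = x" by (simp add: neg_neg W1)
lemma odot_one: "odot one x = x" by (metis W1 imp_contrapos odot_comm)
lemma oplus_one: "oplus one x = one" by (metis imp_one oplus_comm)
lemma odot_neg_self: "odot x (neg x) = zero" by (simp add: neg_neg imp_refl)
lemma zero_le: "le zero x" by (metis imp_K W1 imp_contrapos)
lemma le_oplus: "le x (oplus x y)" by (metis imp_K oplus_comm)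
lemma odot_le: "le (odot x y) x" by (metis le_oplus imp_contrapos neg_neg)
lemma odot_mono: "le x y \<Longrightarrow> le (odot z x) (odot z y)"
  by (metis imp_contrapos imp_antimono_left odot_comm)
lemma oplus_mono: "le x y \<Longrightarrow> le (oplus x z) (oplus y z)"
  by (simp add: imp_contrapos imp_antimono_left)

lemma join_comm: "join x y = join y x" by (rule W3)
lemma join_le: "le x y \<Longrightarrow> join x y = y" by (simp add: W1)
lemma meet_comm: "meet x y = meet y x" by (metis join_comm)
lemma meet_le: "le x y \<Longrightarrow> meet x y = x" by (metis imp_contrapos join_comm W1 neg_neg)
lemma meet_lb1: "le (meet x y) x" by (metis imp_contrapos neg_neg le_join)
lemma meet_lb2: "le (meet x y) y" by (metis meet_comm meet_lb1)
lemma join_lub: "le x z \<Longrightarrow> le y z \<Longrightarrow> le (join x y) z" by (metis W1 W3 imp_antimono_left)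
lemma meet_glb: "le z x \<Longrightarrow> le z y \<Longrightarrow> le z (meet x y)"
  by (metis imp_contrapos neg_neg join_lub)
lemma meet_eq_odot_imp: "meet x y = odot x (imp x y)" by (metis imp_contrapos W1 join_comm)
lemma meet_oplus_odot: "oplus (meet x y) (odot x (neg y)) = x"
  by (metis imp_K W1 imp_contrapos join_comm)

lemma eq_iff_odot_imp_one: "odot (imp x y) (imp y x) = one \<longleftrightarrow> x = y"
proof
  assume h: "odot (imp x y) (imp y x) = one"
  have "le x y" using odot_le[of "imp x y" "imp y x"] h by (simp add: W1)
  moreover have "le y x" using odot_le[of "imp y x" "imp x y"] h odot_comm by (simp add: W1)
  ultimately show "x = y" by (rule le_antisym)
qed (simp add: imp_refl odot_one)

primrec mult :: "nat \<Rightarrow> 'a \<Rightarrow> 'a" where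
  "mult 0 x = zero"
| "mult (Suc k) x = oplus (mult k x) x"

primrec pw :: "nat \<Rightarrow> 'a \<Rightarrow> 'a" where
  "pw 0 x = one"
| "pw (Suc k) x = odot (pw k x) x"

lemma neg_mult: "neg (mult k x) = pw k (neg x)"
  by (induct k) (simp_all add: neg_neg)

lemma mult_add: "mult (k + l) x = oplus (mult k x) (mult l x)"
  by (induct l) (simp_all add: oplus_assoc oplus_comm[of _ zero] oplus_zero)

lemma mult_mult: "mult k (mult l x) = mult (k * l) x"
  by (induct k) (simp_all add: mult_add add.commute oplus_comm)

lemma mult_oplus: "mult k (oplus x y) = oplus (mult k x) (mult k y)"
  by (induct k) (simp_all add: oplus_zero, metis oplus_assoc oplus_comm)

lemma mult_mono_left: "k \<le> l \<Longrightarrow> le (mult k x) (mult l x)"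
  by (metis le_Suc_ex le_oplus mult_add)

lemma mult_mono_right: "le x y \<Longrightarrow> le (mult k x) (mult k y)"
proof (induct k)
  case (Suc k)
  have "le (oplus (mult k x) x) (oplus (mult k y) x)" using Suc oplus_mono by blast
  moreover have "le (oplus (mult k y) x) (oplus (mult k y) y)"
    using Suc(2) oplus_mono oplus_comm by metis
  ultimately show ?case using le_trans by simp
qed (simp add: imp_refl)

lemma meet_mult_eq_zero:
  assumes "meet x y = zero"
  shows "meet x (mult k y) = zero"
proof -
  have absorb: "odot x (neg y) = x"
  proof -
    have "odot x (imp x y) = zero" using assms meet_eq_odot_imp by simp
    then have "le x (odot x (neg y))" by (metis neg_neg)
    then show ?thesis using odot_le le_antisym by blast
  qed
  have absorb_pw: "odot x (pw j (neg y)) = x" for j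
  proof (induct j)
    case 0 show ?case by (simp add: odot_comm[of x] odot_one)
  next
    case (Suc j)
    then show ?case by (metis absorb odot_assoc pw.simps(2))
  qed
  let ?m = "mult k y"
  have absorb_mult: "odot x (neg ?m) = x" using absorb_pw[of k] by (simp add: neg_mult)
  have "meet x ?m = odot x (imp x ?m)" by (rule meet_eq_odot_imp)
  also have "\<dots> = odot (odot x (neg ?m)) (imp x ?m)" by (simp only: absorb_mult)
  also have "\<dots> = odot x (odot (neg ?m) (imp x ?m))" by (rule odot_assoc)
  finally have "le (meet x ?m) (odot x (neg x))"
    using odot_mono[of "odot (neg ?m) (imp x ?m)" "neg x" x]
    by (metis imp_contrapos neg_neg odot_comm imp_refl odot_residuation)
  then show ?thesis using zero_le le_antisym odot_neg_self by metis
qed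

end

section \<open>Solutions of \<open>u = (\<not>u)\<^sup>n\<^sup>-\<^sup>1\<close>\<close>

context wajsberg_algebra
begin

text \<open>The equation defining \<open>q\<^sub>1\<^sub>/\<^sub>n\<close> in \<open>T\<^sub>Q\<close>; in the standard MV-algebra its only
  solution is \<open>1/n\<close>.\<close>

definition nth_part :: "nat \<Rightarrow> 'a \<Rightarrow> bool" where
  "nth_part n u \<longleftrightarrow> 1 \<le> n \<and> u = pw (n - 1) (neg u)"

lemma nth_part_mult_pred: "nth_part n u \<Longrightarrow> mult (n - 1) u = neg u"
  unfolding nth_part_def by (metis neg_mult neg_neg)

lemma nth_part_mult_self:
  assumes "nth_part n u"
  shows "mult n u = one"
proof -
  have "n = Suc (n - 1)" using assms unfolding nth_part_def by simp
  then have "mult n u = oplus (neg u) u" using nth_part_mult_pred[OF assms] by (metis mult.simps(2))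
  then show ?thesis by (metis neg_neg odot_neg_self oplus_comm)
qed

lemma nth_part_mult_ge: "nth_part n u \<Longrightarrow> n \<le> k \<Longrightarrow> mult k u = one"
  by (metis le_Suc_ex mult_add oplus_one nth_part_mult_self)

lemma nth_part_mult_le_pw:
  assumes u: "nth_part n u" and "k \<le> n"
  shows "le (mult (n - k) u) (pw k (neg u))"
  using assms(2)
proof (induct k)
  case (Suc k)
  have n: "n - k = Suc (n - Suc k)" using Suc by simp
  have "n - Suc k \<le> n - 1" by simp
  then have "le (mult (n - Suc k) u) (neg u)"
    using nth_part_mult_pred[OF u] mult_mono_left by metis
  then have "meet (mult (n - Suc k) u) (neg u) = mult (n - Suc k) u" by (rule meet_le)
  then have "odot (mult (n - k) u) (neg u) = mult (n - Suc k) u"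
    using n by (simp add: neg_neg)
  then show ?case
    using Suc odot_mono[of "mult (n - k) u" "pw k (neg u)" "neg u"] by (simp add: odot_comm)
qed (simp add: imp_one)

lemma nth_part_neg_mult:
  assumes u: "nth_part n u" and "k \<le> n"
  shows "neg (mult k u) = mult (n - k) u"
proof (rule le_antisym)
  show "le (mult (n - k) u) (neg (mult k u))"
    using nth_part_mult_le_pw[OF assms] by (simp add: neg_mult)
  have "oplus (mult k u) (mult (n - k) u) = one"
    using assms nth_part_mult_self mult_add by (metis le_add_diff_inverse)
  then show "le (neg (mult k u)) (mult (n - k) u)" by simp
qed

lemma nth_part_oplus:
  "nth_part n u \<Longrightarrow> oplus (mult k u) (mult l u) = mult (min n (k + l)) u"
  by (cases "k + l \<le> n") (simp_all add: mult_add[symmetric] nth_part_mult_ge)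

lemma nth_part_imp:
  assumes "nth_part n u" "k \<le> n"
  shows "imp (mult k u) (mult l u) = mult (min n (n - k + l)) u"
  using assms nth_part_neg_mult[OF assms] nth_part_oplus[OF assms(1)] by (metis neg_neg)

lemma nth_part_odot:
  assumes u: "nth_part n u" and "k \<le> n" "l \<le> n"
  shows "odot (mult k u) (mult l u) = mult (k + l - n) u"
proof -
  have "odot (mult k u) (mult l u) = neg (oplus (mult (n - k) u) (mult (n - l) u))"
    using assms by (simp add: nth_part_neg_mult[symmetric] neg_neg)
  also have "\<dots> = neg (mult (min n (n - k + (n - l))) u)"
    by (simp only: nth_part_oplus[OF u])
  also have "\<dots> = mult (n - min n (n - k + (n - l))) u"
    by (simp add: nth_part_neg_mult[OF u])
  also have "n - min n (n - k + (n - l)) = k + l - n" using assms by simp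
  finally show ?thesis .
qed

lemma mult_meet: "meet (mult k u) (mult l u) = mult (min k l) u"
  by (metis meet_comm meet_le min_def mult_mono_left nle_le)

lemma mult_join: "join (mult k u) (mult l u) = mult (max k l) u"
  by (metis join_comm join_le max_def mult_mono_left nle_le)

text \<open>Uniqueness: write \<open>u = w \<oplus> p\<close> and \<open>v = w \<oplus> p'\<close> with \<open>w = u \<sqinter> v\<close> and disjoint
  \<open>p, p'\<close> (prelinearity); then \<open>\<not>(n w)\<close> lies below the disjoint elements \<open>n p\<close> and
  \<open>n p'\<close>, so \<open>n w = 1\<close>, which forces \<open>u \<le> w\<close>.\<close>

lemma nth_part_le:
  assumes u: "nth_part n u" and v: "nth_part n v"
  shows "le u v"
proof -
  define w where "w = meet u v"
  define p where "p = odot u (neg v)"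
  define p' where "p' = odot v (neg u)"
  have wu: "u = oplus w p" unfolding w_def p_def by (rule meet_oplus_odot[symmetric])
  have wv: "v = oplus w p'" unfolding w_def p'_def by (metis meet_oplus_odot meet_comm)
  have "meet p p' = zero" unfolding p_def p'_def by (simp add: neg_neg prelinearity)
  then have "meet (mult n p') (mult n p) = zero"
    using meet_mult_eq_zero meet_comm by metis
  then have disjoint: "meet (mult n p) (mult n p') = zero" by (simp add: meet_comm)
  have "le (neg (mult n w)) (mult n p)" using nth_part_mult_self[OF u] wu mult_oplus by metis
  moreover have "le (neg (mult n w)) (mult n p')"
    using nth_part_mult_self[OF v] wv mult_oplus by metis
  ultimately have "le (neg (mult n w)) zero" using meet_glb disjoint by metis
  then have "mult n w = one" using zero_le le_antisym neg_neg by metis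
  moreover have "n = Suc (n - 1)" using u unfolding nth_part_def by simp
  ultimately have "le (neg w) (mult (n - 1) w)" by (metis mult.simps(2) oplus_comm)
  moreover have "le (mult (n - 1) w) (neg u)"
    using mult_mono_right[OF meet_lb1[of u v], of "n - 1"] nth_part_mult_pred[OF u]
    unfolding w_def by metis
  ultimately have "le u w" using le_trans imp_contrapos neg_neg by metis
  then show ?thesis using meet_lb2 le_trans unfolding w_def by blast
qed

lemma nth_part_unique: "nth_part n u \<Longrightarrow> nth_part n v \<Longrightarrow> u = v"
  using nth_part_le le_antisym by blast

lemma nth_part_mult:
  assumes u: "nth_part (d * n) u" and "1 \<le> n" "1 \<le> d"
  shows "nth_part n (mult d u)"
proof -
  have d: "d \<le> d * n" using assms by simp
  have pw_mult: "pw j (mult (d * n - d) u) = mult (d * n - j * d) u" for j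
  proof (induct j)
    case 0 show ?case using nth_part_mult_self[OF u] by simp
  next
    case (Suc j)
    then have "pw (Suc j) (mult (d * n - d) u) = mult (d * n - j * d + (d * n - d) - d * n) u"
      using nth_part_odot[OF u] d by simp
    also have "d * n - j * d + (d * n - d) - d * n = d * n - Suc j * d" using d by simp
    finally show ?case .
  qed
  have "pw (n - 1) (neg (mult d u)) = mult (d * n - (n - 1) * d) u"
    using pw_mult nth_part_neg_mult[OF u d] by simp
  also have "d * n - (n - 1) * d = d" using assms by (simp add: algebra_simps diff_mult_distrib)
  finally show ?thesis unfolding nth_part_def using assms by simp
qed

end

fun fm_subst :: "(var \<Rightarrow> fm) \<Rightarrow> (rat \<Rightarrow> fm) \<Rightarrow> fm \<Rightarrow> fm" where
  "fm_subst \<sigma> \<tau> (Var x) = \<sigma> x"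
| "fm_subst \<sigma> \<tau> (Const r) = \<tau> r"
| "fm_subst \<sigma> \<tau> (Prod a b) = Prod (fm_subst \<sigma> \<tau> a) (fm_subst \<sigma> \<tau> b)"
| "fm_subst \<sigma> \<tau> (Imp a b) = Imp (fm_subst \<sigma> \<tau> a) (fm_subst \<sigma> \<tau> b)"
| "fm_subst \<sigma> \<tau> (And a b) = And (fm_subst \<sigma> \<tau> a) (fm_subst \<sigma> \<tau> b)"
| "fm_subst \<sigma> \<tau> (Or a b) = Or (fm_subst \<sigma> \<tau> a) (fm_subst \<sigma> \<tau> b)"
| "fm_subst \<sigma> \<tau> (Neg a) = Neg (fm_subst \<sigma> \<tau> a)"
| "fm_subst \<sigma> \<tau> (Oplus a b) = Oplus (fm_subst \<sigma> \<tau> a) (fm_subst \<sigma> \<tau> b)"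
| "fm_subst \<sigma> \<tau> (Equiv a b) = Equiv (fm_subst \<sigma> \<tau> a) (fm_subst \<sigma> \<tau> b)"

lemma fm_subst_fpow: "\<tau> 1 = Const 1 \<Longrightarrow> fm_subst \<sigma> \<tau> (fpow a k) = fpow (fm_subst \<sigma> \<tau> a) k"
  by (induct a k rule: fpow.induct) auto

lemma fm_subst_fmult: "\<tau> 0 = Const 0 \<Longrightarrow> fm_subst \<sigma> \<tau> (fmult k a) = fmult k (fm_subst \<sigma> \<tau> a)"
  by (induct k a rule: fmult.induct) auto

lemma fconsts_fpow: "fconsts (fpow a k) \<subseteq> fconsts a \<union> {1}"
  by (induct a k rule: fpow.induct) auto

lemma fconsts_fmult: "fconsts (fmult k a) \<subseteq> fconsts a \<union> {0}"
  by (induct k a rule: fmult.induct) auto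

lemma vars_fpow: "vars (fpow a k) \<subseteq> vars a"
  by (induct a k rule: fpow.induct) auto

lemma vars_fmult: "vars (fmult k a) \<subseteq> vars a"
  by (induct k a rule: fmult.induct) auto

section \<open>The Lindenbaum algebra of \<open>T\<^sub>Q\<close>\<close>

definition L_proj :: "fm \<Rightarrow> fm" where
  "L_proj = fm_subst Var (\<lambda>r. if r = 0 \<or> r = 1 then Const r else Const 0)"

interpretation TQ: luk_lindenbaum L_fm "{}" T_Q L_proj
proof unfold_locales
  show "L_proj a \<in> L_fm" for a
    unfolding L_proj_def by (induct a) (auto simp: L_fm_def)
  show "a \<in> L_fm \<Longrightarrow> L_proj a = a" for a
    unfolding L_proj_def by (induct a) (auto simp: L_fm_def)
qed (auto simp: L_fm_def L_proj_def)

quotient_type lind_TQ = fm / "prov_equiv L_fm {} T_Q L_proj"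
  by (rule TQ.equivp_prov_eqv)

lift_definition imp_TQ :: "lind_TQ \<Rightarrow> lind_TQ \<Rightarrow> lind_TQ" is Imp by (rule TQ.prov_eqv_Imp)
lift_definition neg_TQ :: "lind_TQ \<Rightarrow> lind_TQ" is Neg by (rule TQ.prov_eqv_Neg)
lift_definition one_TQ :: "lind_TQ" is "Const 1" .

interpretation TQ_alg: wajsberg_algebra imp_TQ neg_TQ one_TQ
  by unfold_locales
    (transfer, rule TQ.prov_eqv_W1 TQ.prov_eqv_W2 TQ.prov_eqv_W3 TQ.prov_eqv_W4)+

abbreviation cl_TQ :: "fm \<Rightarrow> lind_TQ" where
  "cl_TQ \<equiv> abs_lind_TQ"

lemma cl_TQ_eq_iff: "cl_TQ a = cl_TQ b \<longleftrightarrow> prov_equiv L_fm {} T_Q L_proj a b"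
  by (simp add: lind_TQ.abs_eq_iff)

lemma cl_TQ_Imp: "cl_TQ (Imp a b) = imp_TQ (cl_TQ a) (cl_TQ b)" by (simp add: imp_TQ.abs_eq)
lemma cl_TQ_Neg: "cl_TQ (Neg a) = neg_TQ (cl_TQ a)" by (simp add: neg_TQ.abs_eq)
lemma cl_TQ_one: "cl_TQ (Const 1) = one_TQ" by (simp add: one_TQ.abs_eq)

lemma cl_TQ_zero: "cl_TQ (Const 0) = TQ_alg.zero"
  using TQ.prov_eqv_zero cl_TQ_eq_iff cl_TQ_one cl_TQ_Neg by metis
lemma cl_TQ_Prod: "cl_TQ (Prod a b) = TQ_alg.odot (cl_TQ a) (cl_TQ b)"
  using TQ.prov_eqv_Prod cl_TQ_eq_iff cl_TQ_Imp cl_TQ_Neg by metis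
lemma cl_TQ_Oplus: "cl_TQ (Oplus a b) = TQ_alg.oplus (cl_TQ a) (cl_TQ b)"
  using TQ.prov_eqv_Oplus cl_TQ_eq_iff cl_TQ_Imp cl_TQ_Neg by metis
lemma cl_TQ_Or: "cl_TQ (Or a b) = TQ_alg.join (cl_TQ a) (cl_TQ b)"
  using TQ.prov_eqv_Or cl_TQ_eq_iff cl_TQ_Imp by metis
lemma cl_TQ_And: "cl_TQ (And a b) = TQ_alg.meet (cl_TQ a) (cl_TQ b)"
  using TQ.prov_eqv_And cl_TQ_eq_iff cl_TQ_Imp cl_TQ_Neg by metis
lemma cl_TQ_Equiv:
  "cl_TQ (Equiv a b)
    = TQ_alg.odot (imp_TQ (cl_TQ a) (cl_TQ b)) (imp_TQ (cl_TQ b) (cl_TQ a))"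
  using TQ.prov_eqv_Equiv cl_TQ_eq_iff cl_TQ_Imp cl_TQ_Neg by metis

lemmas cl_TQ_simps = cl_TQ_Imp cl_TQ_Neg cl_TQ_one cl_TQ_zero cl_TQ_Prod cl_TQ_Oplus cl_TQ_Or
  cl_TQ_And cl_TQ_Equiv

lemma cl_TQ_eq_one_iff: "a \<in> L_fm \<Longrightarrow> cl_TQ a = one_TQ \<longleftrightarrow> L_prov T_Q a"
  using TQ.prov_eqv_one_iff cl_TQ_eq_iff[of a "Const 1"] cl_TQ_one
  by (simp add: L_prov_def TQ.proj_id)

lemma L_prov_Equiv_of_cl_TQ_eq:
  "a \<in> L_fm \<Longrightarrow> b \<in> L_fm \<Longrightarrow> cl_TQ a = cl_TQ b \<Longrightarrow> L_prov T_Q (Equiv a b)"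
  by (subst cl_TQ_eq_one_iff[symmetric])
    (auto simp: L_fm_def cl_TQ_Equiv TQ_alg.eq_iff_odot_imp_one)

lemma T_Q_L_fm: "a \<in> T_Q \<Longrightarrow> a \<in> L_fm"
proof (induct rule: T_Q.induct)
  case (tq2 n) then show ?case using fconsts_fpow[of "Neg (q 1 n)" "n - 1"] by (auto simp: L_fm_def)
next
  case (tq3 m n) then show ?case using fconsts_fmult[of m "q 1 n"] by (auto simp: L_fm_def)
qed (auto simp: L_fm_def)

lemma cl_TQ_eq_of_T_Q: "Equiv a b \<in> T_Q \<Longrightarrow> cl_TQ a = cl_TQ b"
  using cl_TQ_eq_one_iff[OF T_Q_L_fm] L_prov_def derivable.hyp cl_TQ_Equiv
    TQ_alg.eq_iff_odot_imp_one by metis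

lemma cl_TQ_fpow: "cl_TQ (fpow a k) = TQ_alg.pw k (cl_TQ a)"
  by (induct a k rule: fpow.induct) (simp_all add: cl_TQ_simps TQ_alg.odot_one)

lemma cl_TQ_fmult: "cl_TQ (fmult k a) = TQ_alg.mult k (cl_TQ a)"
  by (induct k a rule: fmult.induct) (simp_all add: cl_TQ_simps TQ_alg.oplus_zero)

definition unit_TQ :: "nat \<Rightarrow> lind_TQ" where
  "unit_TQ n = cl_TQ (q 1 n)"

lemma nth_part_unit_TQ:
  assumes "1 \<le> n"
  shows "TQ_alg.nth_part n (unit_TQ n)"
proof (cases "n = 1")
  case True
  then show ?thesis
    using cl_TQ_eq_of_T_Q[OF T_Q.tq1] by (simp add: unit_TQ_def cl_TQ_one TQ_alg.nth_part_def)
next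
  case False
  with assms have "n \<ge> 2" by simp
  then show ?thesis
    using cl_TQ_eq_of_T_Q[OF T_Q.tq2]
    by (simp add: unit_TQ_def cl_TQ_fpow cl_TQ_Neg TQ_alg.nth_part_def)
qed

lemma cl_TQ_q:
  assumes "1 \<le> n" "m \<le> n"
  shows "cl_TQ (q m n) = TQ_alg.mult m (unit_TQ n)"
proof -
  consider "n \<ge> 2" | "m = 0" | "m = 1" "n = 1" using assms by linarith
  then show ?thesis
  proof cases
    case 1
    then show ?thesis
      using cl_TQ_eq_of_T_Q[OF T_Q.tq3[OF assms(2)]] cl_TQ_fmult unit_TQ_def by simp
  next
    case 2 then show ?thesis using cl_TQ_eq_of_T_Q[OF T_Q.tq0] assms cl_TQ_zero by simp
  next
    case 3 then show ?thesis by (simp add: unit_TQ_def TQ_alg.oplus_zero)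
  qed
qed

lemma unit_TQ_eq_mult:
  assumes "1 \<le> n" "1 \<le> d"
  shows "unit_TQ n = TQ_alg.mult d (unit_TQ (d * n))"
  using TQ_alg.nth_part_unique[OF nth_part_unit_TQ[OF assms(1)]]
    TQ_alg.nth_part_mult[OF nth_part_unit_TQ] assms by simp

lemma quotient_of_unit_rat:
  assumes "quotient_of r = (p, d)" "r \<in> unit_rat"
  shows "r = of_nat (nat p) / of_nat (nat d)" "nat p \<le> nat d" "1 \<le> nat d"
proof -
  have d: "d > 0" and r: "r = of_int p / of_int d"
    using quotient_of_denom_pos[OF assms(1)] quotient_of_div[OF assms(1)] by auto
  then have "0 \<le> p" "p \<le> d" using assms(2) by (auto simp: unit_rat_def zero_le_divide_iff)
  with d r show "r = of_nat (nat p) / of_nat (nat d)" "nat p \<le> nat d" "1 \<le> nat d" by auto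
qed

lemma unit_rat_common_denominator:
  assumes "r \<in> unit_rat" "s \<in> unit_rat"
  obtains N k l where "1 \<le> N" "k \<le> N" "l \<le> N"
    "r = of_nat k / of_nat N" "s = of_nat l / of_nat N"
proof -
  obtain k d where kd: "1 \<le> d" "k \<le> d" "r = of_nat k / of_nat d"
    using quotient_of_unit_rat[OF _ assms(1)] by (metis surj_pair)
  obtain l e where le: "1 \<le> e" "l \<le> e" "s = of_nat l / of_nat e"
    using quotient_of_unit_rat[OF _ assms(2)] by (metis surj_pair)
  show ?thesis
  proof
    show "1 \<le> d * e" "k * e \<le> d * e" "l * d \<le> d * e" using kd le by auto
    show "r = of_nat (k * e) / of_nat (d * e)" "s = of_nat (l * d) / of_nat (d * e)"
      using kd le by simp_all
  qed
qed

lemma quotient_of_frac: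
  assumes qr: "quotient_of (of_nat k / of_nat N) = (p, d)" and N: "1 \<le> N"
  obtains e where "N = nat d * e" "k = nat p * e"
proof -
  have d: "d > 0" using quotient_of_denom_pos[OF qr] .
  have "of_int p / of_int d = (of_nat k / of_nat N :: rat)" using quotient_of_div[OF qr] by simp
  then have "of_int p * of_nat N = (of_int (int k) * of_int d :: rat)" using d N
    by (simp add: field_simps)
  then have pk: "p * int N = int k * d" by (metis of_int_eq_iff of_int_mult of_int_of_nat_eq)
  then have "d dvd p * int N" by simp
  then have "d dvd int N"
    using quotient_of_coprime[OF qr] by (simp add: coprime_commute coprime_dvd_mult_right_iff)
  then obtain e where e: "int N = d * e" by blast
  then have k: "int k = p * e" using pk d by (simp add: ac_simps)
  have "0 < d * e" using e N by simp
  then have "e > 0" using d by (simp add: zero_less_mult_iff)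
  moreover have "0 \<le> p * e" using k by simp
  ultimately have "p \<ge> 0" by (simp add: zero_le_mult_iff)
  have "int N = int (nat d * nat e)" "int k = int (nat p * nat e)"
    using e k d \<open>e > 0\<close> \<open>p \<ge> 0\<close> by simp_all
  then show ?thesis using that[of "nat e"] by (simp only: of_nat_eq_iff)
qed

lemma cl_TQ_const_star:
  assumes N: "1 \<le> N" and k: "k \<le> N"
  shows "cl_TQ (const_star (of_nat k / of_nat N)) = TQ_alg.mult k (unit_TQ N)"
proof -
  let ?r = "of_nat k / of_nat N :: rat"
  consider "k = 0" | "k = N" | "0 < k" "k < N" using k by linarith
  then show ?thesis
  proof cases
    case 1 then show ?thesis by (simp add: const_star_def cl_TQ_zero)
  next
    case 2 then show ?thesis
      using N TQ_alg.nth_part_mult_self[OF nth_part_unit_TQ[OF N]]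
      by (simp add: const_star_def cl_TQ_one)
  next
    case 3
    obtain p d where qr: "quotient_of ?r = (p, d)" by (cases "quotient_of ?r") auto
    obtain e where e: "N = nat d * e" "k = nat p * e" using quotient_of_frac[OF qr N] .
    have "?r \<in> unit_rat" using k N by (simp add: unit_rat_def divide_le_eq_1)
    then have pd: "nat p \<le> nat d" "1 \<le> nat d" using quotient_of_unit_rat[OF qr] by auto
    have "?r \<noteq> 0" "?r \<noteq> 1" using 3 by auto
    then have "const_star ?r = q (nat p) (nat d)" using qr by (simp add: const_star_def)
    then have "cl_TQ (const_star ?r) = TQ_alg.mult (nat p) (unit_TQ (nat d))"
      using cl_TQ_q pd by simp
    also have "unit_TQ (nat d) = TQ_alg.mult e (unit_TQ N)"
      using unit_TQ_eq_mult[of "nat d" e] pd e N by (simp add: mult.commute)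
    finally show ?thesis using e by (simp add: TQ_alg.mult_mult)
  qed
qed

lemma luk_ops_frac:
  fixes N k l :: nat
  assumes "1 \<le> N" "k \<le> N" "l \<le> N"
  shows "1 - of_nat k / of_nat N = (of_nat (N - k) / of_nat N :: rat)"
    and "luk_prod (of_nat k / of_nat N) (of_nat l / of_nat N) = of_nat (k + l - N) / of_nat N"
    and "luk_imp (of_nat k / of_nat N) (of_nat l / of_nat N)
      = of_nat (min N (N - k + l)) / of_nat N"
    and "luk_oplus (of_nat k / of_nat N) (of_nat l / of_nat N) = of_nat (min N (k + l)) / of_nat N"
    and "min (of_nat k / of_nat N) (of_nat l / of_nat N) = (of_nat (min k l) / of_nat N :: rat)"
    and "max (of_nat k / of_nat N) (of_nat l / of_nat N) = (of_nat (max k l) / of_nat N :: rat)"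
  using assms
  by (auto simp: luk_prod_def luk_imp_def luk_oplus_def divide_simps min_def max_def)

lemma luk_equiv_eq:
  "r \<in> unit_rat \<Longrightarrow> s \<in> unit_rat \<Longrightarrow> luk_equiv r s = luk_prod (luk_imp r s) (luk_imp s r)"
  by (simp add: unit_rat_def luk_equiv_def luk_prod_def luk_imp_def abs_if)

lemma unit_rat_closed:
  assumes "r \<in> unit_rat" "s \<in> unit_rat"
  shows "1 - r \<in> unit_rat" "luk_prod r s \<in> unit_rat" "luk_imp r s \<in> unit_rat"
    "luk_oplus r s \<in> unit_rat" "luk_equiv r s \<in> unit_rat" "min r s \<in> unit_rat" "max r s \<in> unit_rat"
  using assms
  by (auto simp: unit_rat_def luk_prod_def luk_imp_def luk_oplus_def luk_equiv_def abs_if)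

lemma cl_TQ_const_star_ops:
  assumes "r \<in> unit_rat" "s \<in> unit_rat"
  defines "cs \<equiv> \<lambda>r. cl_TQ (const_star r)"
  shows "cs (1 - r) = neg_TQ (cs r)"
    and "cs (luk_prod r s) = TQ_alg.odot (cs r) (cs s)"
    and "cs (luk_imp r s) = imp_TQ (cs r) (cs s)"
    and "cs (luk_oplus r s) = TQ_alg.oplus (cs r) (cs s)"
    and "cs (min r s) = TQ_alg.meet (cs r) (cs s)"
    and "cs (max r s) = TQ_alg.join (cs r) (cs s)"
proof -
  obtain N k l where N: "1 \<le> N" "k \<le> N" "l \<le> N"
    and rs: "r = of_nat k / of_nat N" "s = of_nat l / of_nat N"
    using unit_rat_common_denominator[OF assms(1,2)] .
  have u: "TQ_alg.nth_part N (unit_TQ N)" using nth_part_unit_TQ N by simp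
  have cl: "cs (of_nat j / of_nat N) = TQ_alg.mult j (unit_TQ N)" if "j \<le> N" for j
    using cl_TQ_const_star[OF N(1) that] by (simp add: cs_def)
  note ops = luk_ops_frac[OF N]
  show "cs (1 - r) = neg_TQ (cs r)"
    unfolding rs ops cl[OF diff_le_self] cl[OF N(2)]
    by (rule TQ_alg.nth_part_neg_mult[OF u N(2), symmetric])
  show "cs (luk_prod r s) = TQ_alg.odot (cs r) (cs s)"
    using N unfolding rs ops by (simp add: cl TQ_alg.nth_part_odot[OF u])
  show "cs (luk_imp r s) = imp_TQ (cs r) (cs s)"
    using N unfolding rs ops by (simp add: cl TQ_alg.nth_part_imp[OF u])
  show "cs (luk_oplus r s) = TQ_alg.oplus (cs r) (cs s)"
    using N unfolding rs ops by (simp add: cl TQ_alg.nth_part_oplus[OF u])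
  show "cs (min r s) = TQ_alg.meet (cs r) (cs s)"
    using N unfolding rs ops by (simp add: cl TQ_alg.mult_meet)
  show "cs (max r s) = TQ_alg.join (cs r) (cs s)"
    using N unfolding rs ops by (simp add: cl TQ_alg.mult_join)
qed

lemma star_L_fm: "star a \<in> L_fm"
  by (induct a) (auto simp: L_fm_def const_star_def)

lemma L_prov_star_Equiv: "cl_TQ (star a) = cl_TQ (star b) \<Longrightarrow> L_prov T_Q (star (Equiv a b))"
  using L_prov_Equiv_of_cl_TQ_eq[OF star_L_fm star_L_fm] by simp

lemma L_prov_star_bookkeeping: "b \<in> bookkeeping \<Longrightarrow> L_prov T_Q (star b)"
  by (induct rule: bookkeeping.induct)
    (rule L_prov_star_Equiv,
      simp add: cl_TQ_simps cl_TQ_const_star_ops luk_equiv_eq unit_rat_closed)+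

section \<open>Closed formulas in RPL\<close>

definition RPL_proj :: "fm \<Rightarrow> fm" where
  "RPL_proj = fm_subst (\<lambda>x. case x of VX i \<Rightarrow> Var (VX i) | VQ m n \<Rightarrow> Const 0)
     (\<lambda>r. if r \<in> unit_rat then Const r else Const 0)"

interpretation RPL: luk_lindenbaum RPL_fm bookkeeping "{}" RPL_proj
proof unfold_locales
  show "RPL_proj a \<in> RPL_fm" for a
    unfolding RPL_proj_def
    by (induct a) (auto simp: RPL_fm_def unit_rat_def split: var.split)
  show "a \<in> RPL_fm \<Longrightarrow> RPL_proj a = a" for a
    unfolding RPL_proj_def
    by (induct a) (auto simp: RPL_fm_def unit_rat_def split: var.split)
qed (auto simp: RPL_fm_def RPL_proj_def unit_rat_def)

quotient_type lind_RPL = fm / "prov_equiv RPL_fm bookkeeping {} RPL_proj"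
  by (rule RPL.equivp_prov_eqv)

lift_definition imp_RPL :: "lind_RPL \<Rightarrow> lind_RPL \<Rightarrow> lind_RPL" is Imp by (rule RPL.prov_eqv_Imp)
lift_definition neg_RPL :: "lind_RPL \<Rightarrow> lind_RPL" is Neg by (rule RPL.prov_eqv_Neg)
lift_definition one_RPL :: "lind_RPL" is "Const 1" .

interpretation RPL_alg: wajsberg_algebra imp_RPL neg_RPL one_RPL
  by unfold_locales
    (transfer, rule RPL.prov_eqv_W1 RPL.prov_eqv_W2 RPL.prov_eqv_W3 RPL.prov_eqv_W4)+

abbreviation cl_RPL :: "fm \<Rightarrow> lind_RPL" where
  "cl_RPL \<equiv> abs_lind_RPL"

lemma cl_RPL_eq_iff: "cl_RPL a = cl_RPL b \<longleftrightarrow> prov_equiv RPL_fm bookkeeping {} RPL_proj a b"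
  by (simp add: lind_RPL.abs_eq_iff)

lemma cl_RPL_Imp: "cl_RPL (Imp a b) = imp_RPL (cl_RPL a) (cl_RPL b)" by (simp add: imp_RPL.abs_eq)
lemma cl_RPL_Neg: "cl_RPL (Neg a) = neg_RPL (cl_RPL a)" by (simp add: neg_RPL.abs_eq)
lemma cl_RPL_one: "cl_RPL (Const 1) = one_RPL" by (simp add: one_RPL.abs_eq)

lemma cl_RPL_Prod: "cl_RPL (Prod a b) = RPL_alg.odot (cl_RPL a) (cl_RPL b)"
  using RPL.prov_eqv_Prod cl_RPL_eq_iff cl_RPL_Imp cl_RPL_Neg by metis
lemma cl_RPL_Oplus: "cl_RPL (Oplus a b) = RPL_alg.oplus (cl_RPL a) (cl_RPL b)"
  using RPL.prov_eqv_Oplus cl_RPL_eq_iff cl_RPL_Imp cl_RPL_Neg by metis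
lemma cl_RPL_Or: "cl_RPL (Or a b) = RPL_alg.join (cl_RPL a) (cl_RPL b)"
  using RPL.prov_eqv_Or cl_RPL_eq_iff cl_RPL_Imp by metis
lemma cl_RPL_And: "cl_RPL (And a b) = RPL_alg.meet (cl_RPL a) (cl_RPL b)"
  using RPL.prov_eqv_And cl_RPL_eq_iff cl_RPL_Imp cl_RPL_Neg by metis
lemma cl_RPL_Equiv:
  "cl_RPL (Equiv a b)
    = RPL_alg.odot (imp_RPL (cl_RPL a) (cl_RPL b)) (imp_RPL (cl_RPL b) (cl_RPL a))"
  using RPL.prov_eqv_Equiv cl_RPL_eq_iff cl_RPL_Imp cl_RPL_Neg by metis

lemmas cl_RPL_simps = cl_RPL_Imp cl_RPL_Neg cl_RPL_Prod cl_RPL_Oplus cl_RPL_Or cl_RPL_And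
  cl_RPL_Equiv

lemma cl_RPL_eq_one_iff: "a \<in> RPL_fm \<Longrightarrow> cl_RPL a = one_RPL \<longleftrightarrow> RPL_prov {} a"
  using RPL.prov_eqv_one_iff cl_RPL_eq_iff[of a "Const 1"] cl_RPL_one
  by (simp add: RPL_prov_def RPL.proj_id)

lemma bookkeeping_RPL_fm: "b \<in> bookkeeping \<Longrightarrow> b \<in> RPL_fm"
  by (induct rule: bookkeeping.induct)
    (use unit_rat_closed in \<open>auto simp: RPL_fm_def unit_rat_def\<close>)

lemma cl_RPL_eq_of_bookkeeping: "Equiv a b \<in> bookkeeping \<Longrightarrow> cl_RPL a = cl_RPL b"
  using cl_RPL_eq_one_iff[OF bookkeeping_RPL_fm] RPL_prov_def derivable.axiom cl_RPL_Equiv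
    RPL_alg.eq_iff_odot_imp_one by (metis UnI2)

text \<open>Variables are read as \<open>0\<close>; only the values of closed formulas matter.\<close>

fun closed_val :: "fm \<Rightarrow> rat" where
  "closed_val (Var x) = 0"
| "closed_val (Const r) = r"
| "closed_val (Prod a b) = luk_prod (closed_val a) (closed_val b)"
| "closed_val (Imp a b) = luk_imp (closed_val a) (closed_val b)"
| "closed_val (And a b) = min (closed_val a) (closed_val b)"
| "closed_val (Or a b) = max (closed_val a) (closed_val b)"
| "closed_val (Neg a) = 1 - closed_val a"
| "closed_val (Oplus a b) = luk_oplus (closed_val a) (closed_val b)"
| "closed_val (Equiv a b) = luk_equiv (closed_val a) (closed_val b)"

lemma cl_RPL_closed:
  "vars c = {} \<Longrightarrow> fconsts c \<subseteq> unit_rat \<Longrightarrow>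
    closed_val c \<in> unit_rat \<and> cl_RPL c = cl_RPL (Const (closed_val c))"
  by (induct c)
    (auto simp: cl_RPL_simps unit_rat_closed
      bookkeeping.intros[THEN cl_RPL_eq_of_bookkeeping, THEN sym])

lemma RPL_prov_closed_Equiv:
  assumes "vars a = {}" "fconsts a \<subseteq> unit_rat" "vars b = {}" "fconsts b \<subseteq> unit_rat"
    and "closed_val a = closed_val b"
  shows "RPL_prov {} (Equiv a b)"
proof -
  have "cl_RPL a = cl_RPL b" using cl_RPL_closed assms by metis
  then have "cl_RPL (Equiv a b) = one_RPL" by (simp add: cl_RPL_Equiv RPL_alg.eq_iff_odot_imp_one)
  moreover have "Equiv a b \<in> RPL_fm" using assms by (auto simp: RPL_fm_def unit_rat_def)
  ultimately show ?thesis using cl_RPL_eq_one_iff by simp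
qed

lemma closed_val_fpow:
  "closed_val a \<in> unit_rat \<Longrightarrow> closed_val (fpow a k) = max 0 (1 - of_nat k * (1 - closed_val a))"
  by (induct a k rule: fpow.induct) (auto simp: unit_rat_def luk_prod_def max_def algebra_simps)

lemma closed_val_fmult:
  "closed_val a \<in> unit_rat \<Longrightarrow> closed_val (fmult k a) = min 1 (of_nat k * closed_val a)"
  by (induct k a rule: fmult.induct) (auto simp: unit_rat_def luk_oplus_def min_def algebra_simps)

abbreviation subst_Q :: "fm \<Rightarrow> fm" where
  "subst_Q \<equiv> fm_subst (\<lambda>x. case x of VX i \<Rightarrow> Var (VX i)
     | VQ m n \<Rightarrow> Const (if 0 < n \<and> m \<le> n then of_nat m / of_nat n else 0)) Const"

lemma subst_Q_RPL_fm: "a \<in> L_fm \<Longrightarrow> subst_Q a \<in> RPL_fm"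
  by (induct a) (auto simp: RPL_fm_def L_fm_def divide_le_eq_1 split: var.split)

lemma subst_Q_L_axioms: "a \<in> L_axioms L_fm \<Longrightarrow> subst_Q a \<in> L_axioms RPL_fm"
  by (induct rule: L_axioms.induct) (auto intro: L_axioms.intros subst_Q_RPL_fm)

lemma subst_Q_star: "a \<in> RPL_fm \<Longrightarrow> subst_Q (star a) = a"
proof (induct a)
  case (Const r)
  show ?case
  proof (cases "r = 0 \<or> r = 1")
    case False
    obtain p d where qr: "quotient_of r = (p, d)" by (cases "quotient_of r") auto
    have "r \<in> unit_rat" using Const by (simp add: RPL_fm_def unit_rat_def)
    from quotient_of_unit_rat[OF qr this] show ?thesis using False qr by (simp add: const_star_def)
  qed (auto simp: const_star_def)
qed (auto simp: RPL_fm_def)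

lemma RPL_prov_subst_Q_T_Q: "a \<in> T_Q \<Longrightarrow> RPL_prov {} (subst_Q a)"
proof (induct rule: T_Q.induct)
  case (tq2 n)
  let ?c = "Const (1 / of_nat n)"
  have "RPL_prov {} (Equiv ?c (fpow (Neg ?c) (n - 1)))"
  proof (rule RPL_prov_closed_Equiv)
    show "closed_val ?c = closed_val (fpow (Neg ?c) (n - 1))"
      using tq2 closed_val_fpow[of "Neg ?c" "n - 1"]
      by (simp add: unit_rat_def field_simps)
    show "fconsts (fpow (Neg ?c) (n - 1)) \<subseteq> unit_rat" "vars (fpow (Neg ?c) (n - 1)) = {}"
      using tq2 fconsts_fpow[of "Neg ?c" "n - 1"] vars_fpow[of "Neg ?c" "n - 1"]
      by (auto simp: unit_rat_def)
  qed (use tq2 in \<open>auto simp: unit_rat_def\<close>)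
  then show ?case using tq2 by (simp add: fm_subst_fpow)
next
  case (tq3 m n)
  let ?c = "Const (1 / of_nat n)"
  have "RPL_prov {} (Equiv (Const (of_nat m / of_nat n)) (fmult m ?c))"
  proof (rule RPL_prov_closed_Equiv)
    show "closed_val (Const (of_nat m / of_nat n)) = closed_val (fmult m ?c)"
      using tq3 closed_val_fmult[of ?c m] by (simp add: unit_rat_def min_def divide_le_eq_1)
    show "fconsts (fmult m ?c) \<subseteq> unit_rat" "vars (fmult m ?c) = {}"
      using tq3 fconsts_fmult[of m ?c] vars_fmult[of m ?c] by (auto simp: unit_rat_def)
  qed (use tq3 in \<open>auto simp: unit_rat_def divide_le_eq_1\<close>)
  then show ?case using tq3 by (simp add: fm_subst_fmult)
next
  case (tq0 n)
  then show ?case using RPL_prov_closed_Equiv[of "Const 0" "Const 0"] by (simp add: unit_rat_def)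
next
  case tq1
  show ?case using RPL_prov_closed_Equiv[of "Const 1" "Const 1"] by (simp add: unit_rat_def)
qed

lemma star_L_axioms: "a \<in> L_axioms S \<Longrightarrow> star a \<in> L_axioms L_fm"
  by (induct rule: L_axioms.induct) (auto intro: L_axioms.intros star_L_fm simp: const_star_def)

lemma L_prov_star_of_RPL_prov: "RPL_prov T \<phi> \<Longrightarrow> L_prov (star ` T \<union> T_Q) (star \<phi>)"
  unfolding RPL_prov_def L_prov_def
proof (erule derivable_map)
  fix \<psi> assume "\<psi> \<in> L_axioms RPL_fm \<union> bookkeeping"
  then show "derivable (L_axioms L_fm) (star ` T \<union> T_Q) (star \<psi>)"
  proof
    assume "\<psi> \<in> L_axioms RPL_fm"
    then show ?thesis by (intro derivable.axiom star_L_axioms)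
  next
    assume "\<psi> \<in> bookkeeping"
    then show ?thesis
      by (rule derivable_mono[OF L_prov_star_bookkeeping[unfolded L_prov_def]]) auto
  qed
next
  fix \<psi> assume "\<psi> \<in> T"
  then show "derivable (L_axioms L_fm) (star ` T \<union> T_Q) (star \<psi>)" by (simp add: derivable.hyp)
qed simp

lemma RPL_prov_subst_Q_of_L_prov:
  assumes "T \<subseteq> RPL_fm" "L_prov (star ` T \<union> T_Q) \<psi>"
  shows "RPL_prov T (subst_Q \<psi>)"
  using assms(2) unfolding RPL_prov_def L_prov_def
proof (rule derivable_map)
  fix \<chi> assume "\<chi> \<in> star ` T \<union> T_Q"
  then show "derivable (L_axioms RPL_fm \<union> bookkeeping) T (subst_Q \<chi>)"
  proof
    assume "\<chi> \<in> star ` T"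
    then obtain a where "a \<in> T" "\<chi> = star a" by blast
    then have "subst_Q \<chi> = a" using assms(1) subst_Q_star by blast
    then show ?thesis using \<open>a \<in> T\<close> by (simp add: derivable.hyp)
  next
    assume "\<chi> \<in> T_Q"
    then show ?thesis
      by (rule derivable_mono[OF RPL_prov_subst_Q_T_Q[unfolded RPL_prov_def]]) auto
  qed
next
  fix \<chi> assume "\<chi> \<in> L_axioms L_fm"
  then show "derivable (L_axioms RPL_fm \<union> bookkeeping) T (subst_Q \<chi>)"
    by (intro derivable.axiom UnI1 subst_Q_L_axioms)
qed simp

theorem corollary3p5:
  assumes "T \<subseteq> RPL_fm" and "\<phi> \<in> RPL_fm"
  shows "(RPL_prov T \<phi> \<longleftrightarrow> L_prov (star ` T \<union> T_Q) (star \<phi>))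
       \<and> (RPL_prov {} \<phi> \<longleftrightarrow> L_prov T_Q (star \<phi>))"
proof -
  have "RPL_prov T' \<phi> \<longleftrightarrow> L_prov (star ` T' \<union> T_Q) (star \<phi>)" if "T' \<subseteq> RPL_fm" for T'
  proof
    show "RPL_prov T' \<phi> \<Longrightarrow> L_prov (star ` T' \<union> T_Q) (star \<phi>)"
      by (rule L_prov_star_of_RPL_prov)
  next
    assume "L_prov (star ` T' \<union> T_Q) (star \<phi>)"
    then have "RPL_prov T' (subst_Q (star \<phi>))" by (rule RPL_prov_subst_Q_of_L_prov[OF that])
    then show "RPL_prov T' \<phi>" by (simp only: subst_Q_star[OF assms(2)])
  qed
  from this[OF assms(1)] this[of "{}"] show ?thesis by simp
qed

end
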